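(* Let $A\in\mathbb Z^{d\times n}$ with $\ker(A)\cap\mathbb N^n=\{0\}$. Suppose that $A$ has a unique minimal Markov basis $M$ up to replacing its elements by their negatives. If $M$ is distance reducing, then $S(A)=D(A)=M(A)=\mathcal D(A)$.
   Context: For $z\in\mathbb Z^n$, $z^\pm\in\mathbb N^n$ are the unique vectors with disjoint supports and $z=z^+-z^-$; $\|\cdot\|$ is the $1$-norm; $\le$ is coordinatewise. A Markov basis is a set $B\subseteq\ker(A)$ whose binomials $x^{u^+}-x^{u^-}$ generate the toric ideal $I_A=\langle x^{u^+}-x^{u^-}:u\in\ker(A)\rangle$; minimal means no proper subset is one. $M(A)$ is the union of all minimal Markov bases. $S(A)$ is the set of nonzero $z\in\ker(A)$ with no decomposition $z=u+v$, $u,v\in\ker(A)\setminus\{0\}$, such that $u_i>0\Rightarrow v_i\ge0$ for all $i$. A positive (resp. negative) distance decomposition of $z$ is $z=u+v$ with $u,v\in\ker(A)\setminus\{0\}$, $u^+\le z^+$ (resp. $u^-\le z^-$), $\|v\|<\|z\|$; $D(A)$ is the set of nonzero $z\in\ker(A)$ admitting neither. For nonzero $z\in\ker(A)$, $u$ reduces the distance of $z$ if there exist $(p,q)\in\{(z^+,z^-),(z^-,z^+)\}$ and $\varepsilon\in\{\pm1\}$ with $p+\varepsilon u\in\mathbb N^n$ and $\|p+\varepsilon u-q\|<\|z\|$; $B$ is distance reducing if every nonzero $z\in\ker(A)$ has its distance reduced by some element of $B$. $\mathcal D(A)$ is the union of all minimal distance reducing Markov bases, i.e., distance reducing sets $B\subseteq\ker(A)$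 no proper subset of which is distance reducing. *)

theory Defs
  imports Complex_Main "HOL-Library.Poly_Mapping" "HOL-Library.Function_Algebras"
begin

(* Vectors in Z^n are functions 'n => int for a finite index type 'n;
   a d x n integer matrix is a function 'd => 'n => int. *)

definition kerA :: "('d::finite \<Rightarrow> 'n::finite \<Rightarrow> int) \<Rightarrow> ('n \<Rightarrow> int) set" where
  "kerA A = {z. \<forall>r. (\<Sum>j\<in>UNIV. A r j * z j) = 0}"

definition natvec :: "('n \<Rightarrow> int) \<Rightarrow> bool" where
  "natvec u \<longleftrightarrow> (\<forall>i. u i \<ge> 0)"

definition posp :: "('n \<Rightarrow> int) \<Rightarrow> ('n \<Rightarrow> int)" where
  "posp z = (\<lambda>i. max (z i) 0)"

definition negp :: "('n \<Rightarrow> int) \<Rightarrow> ('n \<Rightarrow> int)" where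
  "negp z = (\<lambda>i. max (- z i) 0)"

definition norm1 :: "('n::finite \<Rightarrow> int) \<Rightarrow> int" where
  "norm1 z = (\<Sum>i\<in>UNIV. \<bar>z i\<bar>)"

(* polynomial ring k[x_i : i in 'n] over k = rat, as finitely supported maps
   from exponent vectors to coefficients *)
type_synonym 'n poly_ring = "('n \<Rightarrow>\<^sub>0 nat) \<Rightarrow>\<^sub>0 rat"

definition monomial_of :: "('n::finite \<Rightarrow> int) \<Rightarrow> 'n poly_ring" where
  "monomial_of u = Poly_Mapping.single (Abs_poly_mapping (\<lambda>i. nat (u i))) 1"

definition binomial_of :: "('n::finite \<Rightarrow> int) \<Rightarrow> 'n poly_ring" where
  "binomial_of z = monomial_of (posp z) - monomial_of (negp z)"

definition gen_ideal :: "'a::comm_ring_1 set \<Rightarrow> 'a set" where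
  "gen_ideal G = {p. \<exists>S f. finite S \<and> S \<subseteq> G \<and> p = (\<Sum>g\<in>S. f g * g)}"

definition toric_ideal :: "('d::finite \<Rightarrow> 'n::finite \<Rightarrow> int) \<Rightarrow> 'n poly_ring set" where
  "toric_ideal A = gen_ideal (binomial_of ` kerA A)"

definition markov_basis :: "('d::finite \<Rightarrow> 'n::finite \<Rightarrow> int) \<Rightarrow> ('n \<Rightarrow> int) set \<Rightarrow> bool" where
  "markov_basis A B \<longleftrightarrow> B \<subseteq> kerA A \<and> gen_ideal (binomial_of ` B) = toric_ideal A"

definition minimal_markov_basis :: "('d::finite \<Rightarrow> 'n::finite \<Rightarrow> int) \<Rightarrow> ('n \<Rightarrow> int) set \<Rightarrow> bool" where
  "minimal_markov_basis A B \<longleftrightarrow> markov_basis A B \<and> (\<forall>B'. B' \<subset> B \<longrightarrow> \<not> markov_basis A B')"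

definition MA :: "('d::finite \<Rightarrow> 'n::finite \<Rightarrow> int) \<Rightarrow> ('n \<Rightarrow> int) set" where
  "MA A = \<Union>{B. minimal_markov_basis A B}"

definition SA :: "('d::finite \<Rightarrow> 'n::finite \<Rightarrow> int) \<Rightarrow> ('n \<Rightarrow> int) set" where
  "SA A = {z \<in> kerA A. z \<noteq> 0 \<and>
     \<not> (\<exists>u v. u \<in> kerA A - {0} \<and> v \<in> kerA A - {0} \<and> z = u + v \<and>
              (\<forall>i. u i > 0 \<longrightarrow> v i \<ge> 0))}"

definition pos_dist_decomp :: "('d::finite \<Rightarrow> 'n::finite \<Rightarrow> int) \<Rightarrow> ('n \<Rightarrow> int) \<Rightarrow> bool" where
  "pos_dist_decomp A z \<longleftrightarrow> (\<exists>u v. u \<in> kerA A - {0} \<and> v \<in> kerA A - {0} \<and> z = u + v \<and>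
       posp u \<le> posp z \<and> norm1 v < norm1 z)"

definition neg_dist_decomp :: "('d::finite \<Rightarrow> 'n::finite \<Rightarrow> int) \<Rightarrow> ('n \<Rightarrow> int) \<Rightarrow> bool" where
  "neg_dist_decomp A z \<longleftrightarrow> (\<exists>u v. u \<in> kerA A - {0} \<and> v \<in> kerA A - {0} \<and> z = u + v \<and>
       negp u \<le> negp z \<and> norm1 v < norm1 z)"

definition DA :: "('d::finite \<Rightarrow> 'n::finite \<Rightarrow> int) \<Rightarrow> ('n \<Rightarrow> int) set" where
  "DA A = {z \<in> kerA A. z \<noteq> 0 \<and> \<not> pos_dist_decomp A z \<and> \<not> neg_dist_decomp A z}"

definition reduces_distance :: "('n::finite \<Rightarrow> int) \<Rightarrow> ('n \<Rightarrow> int) \<Rightarrow> bool" where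
  "reduces_distance u z \<longleftrightarrow>
     (\<exists>p q e. (p, q) \<in> {(posp z, negp z), (negp z, posp z)} \<and> e \<in> {1, -1::int} \<and>
        natvec (\<lambda>i. p i + e * u i) \<and> norm1 (\<lambda>i. p i + e * u i - q i) < norm1 z)"

definition distance_reducing :: "('d::finite \<Rightarrow> 'n::finite \<Rightarrow> int) \<Rightarrow> ('n \<Rightarrow> int) set \<Rightarrow> bool" where
  "distance_reducing A B \<longleftrightarrow> B \<subseteq> kerA A \<and>
     (\<forall>z \<in> kerA A. z \<noteq> 0 \<longrightarrow> (\<exists>u \<in> B. reduces_distance u z))"

definition minimal_distance_reducing :: "('d::finite \<Rightarrow> 'n::finite \<Rightarrow> int) \<Rightarrow> ('n \<Rightarrow> int) set \<Rightarrow> bool" where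
  "minimal_distance_reducing A B \<longleftrightarrow> distance_reducing A B \<and>
     (\<forall>B'. B' \<subset> B \<longrightarrow> \<not> distance_reducing A B')"

definition calDA :: "('d::finite \<Rightarrow> 'n::finite \<Rightarrow> int) \<Rightarrow> ('n \<Rightarrow> int) set" where
  "calDA A = \<Union>{B. minimal_distance_reducing A B}"

end

theory Submission
  imports Defs
begin

(*
  Since M is the unique minimal Markov basis up to sign, every z in M is indispensable:
  each minimal Markov basis contains z or -z. This forces the fiber of z^+ to be {z^+, z^-}.
  Indeed, a third point m of that fiber would allow replacing the move z by the two moves
  z^+ - m and m - z^-, and a minimal Markov basis inside the resulting Markov basis (one
  exists by Zorn's lemma, because fibers are finite) would avoid both z and -z.
  Throughout, Markov bases are used as exactly the sets of moves connecting every fiber.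

  A two-point fiber rules out every decomposition occurring in the definitions of S(A) and
  D(A), so +-M lies in S(A) and in D(A). Conversely, if M is distance reducing, a vector of
  S(A) or D(A) can only have its distance reduced by itself or its negative, so S(A) and D(A)
  lie in +-M. Finally M(A) = +-M by uniqueness, and the union of the minimal distance
  reducing sets is +-M because each of them contains z or -z for every z in D(A).
*)

section \<open>Kernel vectors and their positive and negative parts\<close>

lemma zero_in_kerA: "0 \<in> kerA A"
  by (simp add: kerA_def)

lemma add_in_kerA: "u \<in> kerA A \<Longrightarrow> v \<in> kerA A \<Longrightarrow> u + v \<in> kerA A"
  by (simp add: kerA_def distrib_left sum.distrib)

lemma uminus_in_kerA: "u \<in> kerA A \<Longrightarrow> - u \<in> kerA A"
  by (simp add: kerA_def sum_negf)

lemma diff_in_kerA: "u \<in> kerA A \<Longrightarrow> v \<in> kerA A \<Longrightarrow> u - v \<in> kerA A"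
  using add_in_kerA uminus_in_kerA by fastforce

lemma posp_minus_negp: "posp z - negp z = z"
  by (auto simp: posp_def negp_def fun_eq_iff)

lemma natvec_posp [simp]: "natvec (posp z)"
  by (simp add: natvec_def posp_def)

lemma natvec_negp [simp]: "natvec (negp z)"
  by (simp add: natvec_def negp_def)

lemma posp_uminus [simp]: "posp (- z) = negp z"
  by (simp add: posp_def negp_def fun_eq_iff)

lemma negp_uminus [simp]: "negp (- z) = posp z"
  by (simp add: posp_def negp_def fun_eq_iff)

lemma natvec_min: "natvec p \<Longrightarrow> natvec q \<Longrightarrow> natvec (\<lambda>i. min (p i) (q i))"
  by (simp add: natvec_def)

lemma min_plus_posp_diff: "(\<lambda>i. min (p i) (q i)) + posp (p - q) = p"
  by (auto simp: posp_def fun_eq_iff)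

lemma min_plus_negp_diff: "(\<lambda>i. min (p i) (q i)) + negp (p - q) = q"
  by (auto simp: negp_def fun_eq_iff)

lemma norm1_uminus [simp]: "norm1 (- z) = norm1 z"
  by (simp add: norm1_def)

lemma posp_minus_self: "posp z - z = negp z"
  by (auto simp: fun_eq_iff posp_def negp_def max_def)

lemma negp_plus_self: "negp z + z = posp z"
  by (auto simp: fun_eq_iff posp_def negp_def max_def)

lemma natvec_of_natvec_posp_plus:
  assumes "natvec (posp z + z)"
  shows "natvec z"
  unfolding natvec_def
proof
  fix i
  have "0 \<le> max (z i) 0 + z i"
    using assms by (simp add: natvec_def posp_def)
  then show "0 \<le> z i"
    by linarith
qed

section \<open>Binomials and connectivity of fibers\<close>

interpretation ring_module: module "(*) :: 'a::comm_ring_1 \<Rightarrow> 'a \<Rightarrow> 'a"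
  by unfold_locales (simp_all add: algebra_simps)

lemma gen_ideal_eq_span: "gen_ideal G = ring_module.span G"
  by (auto simp: gen_ideal_def ring_module.span_explicit)

definition exponent :: "('n::finite \<Rightarrow> int) \<Rightarrow> ('n \<Rightarrow>\<^sub>0 nat)" where
  "exponent v = Abs_poly_mapping (\<lambda>i. nat (v i))"

lemma lookup_exponent [simp]: "Poly_Mapping.lookup (exponent v) = (\<lambda>i. nat (v i))"
  unfolding exponent_def by (simp add: Abs_poly_mapping_inverse)

lemma monomial_of_eq_single: "monomial_of v = Poly_Mapping.single (exponent v) 1"
  by (simp add: monomial_of_def exponent_def)

lemma monomial_of_add:
  assumes "natvec x" "natvec y"
  shows "monomial_of (x + y) = monomial_of x * monomial_of y"
proof -
  have "exponent (x + y) = exponent x + exponent y"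
    using assms by (intro poly_mapping_eqI) (simp add: lookup_add natvec_def nat_add_distrib)
  then show ?thesis
    by (simp add: monomial_of_eq_single mult_single)
qed

lemma monomial_diff_eq_mult_binomial:
  assumes "natvec p" "natvec q"
  shows "monomial_of p - monomial_of q
    = monomial_of (\<lambda>i. min (p i) (q i)) * binomial_of (p - q)"
  using monomial_of_add[OF natvec_min[OF assms] natvec_posp, of "p - q"]
    monomial_of_add[OF natvec_min[OF assms] natvec_negp, of "p - q"]
  by (simp add: binomial_of_def right_diff_distrib min_plus_posp_diff min_plus_negp_diff)

definition coeff_sum :: "'a set \<Rightarrow> ('a \<Rightarrow>\<^sub>0 'b::comm_monoid_add) \<Rightarrow> 'b" where
  "coeff_sum C p = (\<Sum>a\<in>Poly_Mapping.keys p. Poly_Mapping.lookup p a when a \<in> C)"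

lemma coeff_sum_superset:
  assumes "finite S" "Poly_Mapping.keys p \<subseteq> S"
  shows "coeff_sum C p = (\<Sum>a\<in>S. Poly_Mapping.lookup p a when a \<in> C)"
  unfolding coeff_sum_def using assms by (intro sum.mono_neutral_left) (auto simp: in_keys_iff)

lemma coeff_sum_add: "coeff_sum C (p + q) = coeff_sum C p + coeff_sum C q"
proof -
  let ?S = "Poly_Mapping.keys p \<union> Poly_Mapping.keys q"
  have "coeff_sum C (p + q) = (\<Sum>a\<in>?S. Poly_Mapping.lookup (p + q) a when a \<in> C)"
    by (rule coeff_sum_superset) (simp_all add: keys_add)
  also have "\<dots> = (\<Sum>a\<in>?S. Poly_Mapping.lookup p a when a \<in> C)
      + (\<Sum>a\<in>?S. Poly_Mapping.lookup q a when a \<in> C)"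
    by (simp add: lookup_add when_add_distrib sum.distrib)
  also have "\<dots> = coeff_sum C p + coeff_sum C q"
    using coeff_sum_superset[of ?S p C] coeff_sum_superset[of ?S q C] by simp
  finally show ?thesis .
qed

lemma coeff_sum_diff:
  "coeff_sum C (p - q) = coeff_sum C p - coeff_sum C (q :: 'a \<Rightarrow>\<^sub>0 'b::ab_group_add)"
  using coeff_sum_add[of C "p - q" q] by (simp add: eq_diff_eq)

lemma coeff_sum_sum: "coeff_sum C (sum f S) = (\<Sum>s\<in>S. coeff_sum C (f s))"
  by (induction S rule: infinite_finite_induct) (simp_all add: coeff_sum_add coeff_sum_def[of C 0])

lemma coeff_sum_single: "coeff_sum C (Poly_Mapping.single a c) = (c when a \<in> C)"
  by (subst coeff_sum_superset[of "{a}"]) auto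

lemma poly_mapping_sum_single:
  "p = (\<Sum>a\<in>Poly_Mapping.keys p. Poly_Mapping.single a (Poly_Mapping.lookup p a))"
  by (rule poly_mapping_eqI) (simp add: lookup_sum lookup_single when_def in_keys_iff)

lemma coeff_sum_mult_single:
  fixes p :: "('a::comm_monoid_add \<Rightarrow>\<^sub>0 'b::semiring_1)"
  shows "coeff_sum C (p * Poly_Mapping.single b 1)
    = (\<Sum>a\<in>Poly_Mapping.keys p. Poly_Mapping.lookup p a when a + b \<in> C)"
proof -
  have "p * Poly_Mapping.single b 1
      = (\<Sum>a\<in>Poly_Mapping.keys p. Poly_Mapping.single (a + b) (Poly_Mapping.lookup p a))"
    by (subst (1) poly_mapping_sum_single) (simp add: sum_distrib_right mult_single)
  then show ?thesis
    by (simp add: coeff_sum_sum coeff_sum_single)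
qed

definition move :: "('n \<Rightarrow> int) set \<Rightarrow> ('n \<Rightarrow> int) \<Rightarrow> ('n \<Rightarrow> int) \<Rightarrow> bool" where
  "move B x y \<longleftrightarrow> natvec x \<and> natvec y \<and> (x - y \<in> B \<or> y - x \<in> B)"

abbreviation reachable :: "('n \<Rightarrow> int) set \<Rightarrow> ('n \<Rightarrow> int) \<Rightarrow> ('n \<Rightarrow> int) \<Rightarrow> bool" where
  "reachable B \<equiv> (move B)\<^sup>*\<^sup>*"

definition connects_fibers :: "('d::finite \<Rightarrow> 'n::finite \<Rightarrow> int) \<Rightarrow> ('n \<Rightarrow> int) set \<Rightarrow> bool" where
  "connects_fibers A B \<longleftrightarrow>
     (\<forall>x y. natvec x \<longrightarrow> natvec y \<longrightarrow> x - y \<in> kerA A \<longrightarrow> reachable B x y)"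

lemma move_sym: "move B x y \<Longrightarrow> move B y x"
  by (auto simp: move_def)

lemma reachable_sym: "reachable B x y \<Longrightarrow> reachable B y x"
  using symp_rtranclp[of "move B"] move_sym by (auto simp: symp_def)

lemma reachable_translate:
  assumes "reachable B x y" "natvec g"
  shows "reachable B (g + x) (g + y)"
  using assms(1)
proof (induction rule: rtranclp_induct)
  case (step y z)
  then have "move B (g + y) (g + z)"
    using assms(2) by (auto simp: move_def natvec_def)
  with step.IH show ?case
    by (meson rtranclp.rtrancl_into_rtrancl)
qed simp

lemma reachable_if_reachable_posp_negp:
  assumes "reachable B (posp (p - q)) (negp (p - q))" "natvec p" "natvec q"
  shows "reachable B p q"
  using reachable_translate[OF assms(1) natvec_min[OF assms(2,3)]]
  by (simp add: min_plus_posp_diff min_plus_negp_diff)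

lemma reachable_mono:
  assumes "\<And>p q. move B p q \<Longrightarrow> reachable B' p q" "reachable B x y"
  shows "reachable B' x y"
  using assms(2) by induction (auto intro: rtranclp_trans assms(1))

lemma markov_basis_kerA: "markov_basis A (kerA A)"
  by (simp add: markov_basis_def toric_ideal_def)

lemma markov_basis_subset_kerA: "markov_basis A B \<Longrightarrow> B \<subseteq> kerA A"
  by (simp add: markov_basis_def)

lemma move_binomial_in_span:
  assumes "move B p q"
  shows "monomial_of p - monomial_of q \<in> ring_module.span (binomial_of ` B)"
proof -
  have "monomial_of x - monomial_of y \<in> ring_module.span (binomial_of ` B)"
    if "natvec x" "natvec y" "x - y \<in> B" for x y
    unfolding monomial_diff_eq_mult_binomial[OF that(1,2)]
    using that(3) by (intro ring_module.span_scale ring_module.span_base) simp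
  then show ?thesis
    using assms unfolding move_def by (metis minus_diff_eq ring_module.span_neg)
qed

lemma reachable_binomial_in_span:
  "reachable B x y \<Longrightarrow> monomial_of x - monomial_of y \<in> ring_module.span (binomial_of ` B)"
proof (induction rule: rtranclp_induct)
  case (step y z)
  from ring_module.span_add[OF step.IH move_binomial_in_span[OF step.hyps(2)]]
  show ?case by simp
qed (simp add: ring_module.span_zero)

lemma connects_fibers_imp_markov_basis:
  assumes "B \<subseteq> kerA A" "connects_fibers A B"
  shows "markov_basis A B"
proof -
  have "binomial_of w \<in> ring_module.span (binomial_of ` B)" if "w \<in> kerA A" for w
    using assms(2) that reachable_binomial_in_span[of B "posp w" "negp w"]
    by (simp add: connects_fibers_def posp_minus_negp binomial_of_def)
  moreover have "binomial_of ` B \<subseteq> ring_module.span (binomial_of ` kerA A)"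
    using assms(1) by (auto intro: ring_module.span_base)
  ultimately show ?thesis
    using assms(1)
    by (auto simp: markov_basis_def toric_ideal_def gen_ideal_eq_span ring_module.span_eq)
qed

text \<open>The coefficient sum over a set of exponents that is closed under the moves of \<open>B\<close> is a
  linear functional vanishing on the ideal generated by the binomials of \<open>B\<close>. For the exponents
  reachable from \<open>w\<^sup>+\<close> it separates \<open>w\<^sup>+\<close> from \<open>w\<^sup>-\<close> unless \<open>w\<^sup>-\<close> is reachable too.\<close>

lemma coeff_sum_vanishes_on_span:
  assumes closed: "\<And>a b. b \<in> B \<Longrightarrow> a + exponent (posp b) \<in> C \<longleftrightarrow> a + exponent (negp b) \<in> C"
    and "p \<in> ring_module.span (binomial_of ` B)"
  shows "coeff_sum C p = 0"
  using assms(2)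
proof (induction rule: ring_module.span_induct_alt)
  case base
  show ?case
    by (simp add: coeff_sum_def)
next
  case (step c x y)
  then obtain b where "b \<in> B" "x = binomial_of b"
    by blast
  with closed have "coeff_sum C (c * x) = 0"
    by (simp add: binomial_of_def monomial_of_eq_single right_diff_distrib
        coeff_sum_diff coeff_sum_mult_single)
  with step.IH show ?case
    by (simp add: coeff_sum_add)
qed

lemma markov_basis_reachable_posp_negp:
  fixes A :: "'d::finite \<Rightarrow> 'n::finite \<Rightarrow> int"
  assumes "markov_basis A B" "w \<in> kerA A"
  shows "reachable B (posp w) (negp w)"
proof -
  let ?vec = "\<lambda>a i. int (Poly_Mapping.lookup a i)"
  define C where "C = {a. reachable B (posp w) (?vec a)}"
  have vec_exponent: "?vec (a + exponent v) = ?vec a + v"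
    if "natvec v" for a :: "'n \<Rightarrow>\<^sub>0 nat" and v
    using that by (auto simp: lookup_add natvec_def fun_eq_iff)
  have closed: "a + exponent (posp b) \<in> C \<longleftrightarrow> a + exponent (negp b) \<in> C" if "b \<in> B" for a b
  proof -
    have "?vec (a + exponent (posp b)) - ?vec (a + exponent (negp b)) = b"
      by (simp add: vec_exponent posp_minus_negp)
    then have "move B (?vec (a + exponent (posp b))) (?vec (a + exponent (negp b)))"
      using that by (simp add: move_def natvec_def)
    then show ?thesis
      unfolding C_def mem_Collect_eq by (meson move_sym rtranclp.rtrancl_into_rtrancl)
  qed
  have "binomial_of w \<in> ring_module.span (binomial_of ` B)"
    using assms by (simp add: markov_basis_def toric_ideal_def gen_ideal_eq_span
        ring_module.span_base)
  from coeff_sum_vanishes_on_span[OF closed this]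
  have "exponent (posp w) \<in> C \<longleftrightarrow> exponent (negp w) \<in> C"
    by (simp add: binomial_of_def monomial_of_eq_single coeff_sum_diff coeff_sum_single when_def
        split: if_splits)
  moreover have "?vec (exponent v) = v" if "natvec v" for v :: "'n \<Rightarrow> int"
    using that by (simp add: natvec_def fun_eq_iff)
  ultimately show ?thesis
    by (simp add: C_def)
qed

lemma markov_basis_imp_connects_fibers: "markov_basis A B \<Longrightarrow> connects_fibers A B"
  by (auto simp: connects_fibers_def intro: reachable_if_reachable_posp_negp
      markov_basis_reachable_posp_negp)

lemma markov_basis_if_moves_reachable:
  assumes "markov_basis A B" "B' \<subseteq> kerA A" "\<And>p q. move B p q \<Longrightarrow> reachable B' p q"
  shows "markov_basis A B'"
  using markov_basis_imp_connects_fibers[OF assms(1)] reachable_mono[OF assms(3)]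
  by (auto simp: connects_fibers_def intro!: connects_fibers_imp_markov_basis[OF assms(2)])

lemma markov_basis_signed_subset:
  assumes "markov_basis A B" "B' \<subseteq> kerA A" "\<And>u. u \<in> B \<Longrightarrow> u \<noteq> 0 \<Longrightarrow> u \<in> B' \<or> - u \<in> B'"
  shows "markov_basis A B'"
proof (rule markov_basis_if_moves_reachable[OF assms(1,2)])
  fix p q
  assume "move B p q"
  with assms(3)[of "p - q"] assms(3)[of "q - p"] have "p = q \<or> move B' p q"
    by (auto simp: move_def)
  then show "reachable B' p q" by auto
qed

lemma markov_basis_sign_change:
  assumes "markov_basis A B" "\<forall>x\<in>B. f x = x \<or> f x = - x"
  shows "markov_basis A (f ` B)"
proof (rule markov_basis_signed_subset[OF assms(1)])
  show "f ` B \<subseteq> kerA A"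
    using markov_basis_subset_kerA[OF assms(1)] assms(2) uminus_in_kerA by fastforce
  show "u \<in> f ` B \<or> - u \<in> f ` B" if "u \<in> B" for u
    using assms(2) that by (metis image_eqI)
qed

section \<open>Minimal Markov bases\<close>

lemma minimal_markov_basisD:
  assumes "minimal_markov_basis A M"
  shows "markov_basis A M" "B' \<subset> M \<Longrightarrow> \<not> markov_basis A B'"
  using assms by (simp_all add: minimal_markov_basis_def)

lemma zero_notin_minimal_markov_basis:
  assumes "minimal_markov_basis A M"
  shows "0 \<notin> M"
proof
  assume "0 \<in> M"
  note M = minimal_markov_basisD[OF assms]
  have "markov_basis A (M - {0})"
  proof (rule markov_basis_signed_subset[OF M(1)])
    show "M - {0} \<subseteq> kerA A"
      using markov_basis_subset_kerA[OF M(1)] by blast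
  qed auto
  with \<open>0 \<in> M\<close> M(2) show False
    by blast
qed

lemma uminus_notin_minimal_markov_basis:
  assumes "minimal_markov_basis A M" "u \<in> M"
  shows "- u \<notin> M"
proof
  assume "- u \<in> M"
  note M = minimal_markov_basisD[OF assms(1)]
  have "u \<noteq> 0"
    using assms zero_notin_minimal_markov_basis by blast
  then obtain i where "u i \<noteq> 0"
    by (auto simp: fun_eq_iff)
  then have "- u \<noteq> u"
    by (metis neg_equal_zero uminus_apply)
  have "markov_basis A (M - {u})"
  proof (rule markov_basis_signed_subset[OF M(1)])
    show "M - {u} \<subseteq> kerA A"
      using markov_basis_subset_kerA[OF M(1)] by blast
  qed (use \<open>- u \<in> M\<close> \<open>- u \<noteq> u\<close> in auto)
  with assms(2) M(2) show False
    by blast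
qed

lemma minimal_markov_basis_sign_change:
  assumes "minimal_markov_basis A M" "\<And>x. f (f x) = x" "\<And>x. f x = x \<or> f x = - x"
  shows "minimal_markov_basis A (f ` M)"
  unfolding minimal_markov_basis_def
proof (intro conjI allI impI notI)
  note M = minimal_markov_basisD[OF assms(1)]
  show "markov_basis A (f ` M)"
    using M(1) assms(3) by (simp add: markov_basis_sign_change)
  fix B'
  assume "B' \<subset> f ` M" "markov_basis A B'"
  have ff: "f ` f ` X = X" for X
    by (simp add: image_image assms(2))
  have "markov_basis A (f ` B')"
    using \<open>markov_basis A B'\<close> assms(3) by (simp add: markov_basis_sign_change)
  moreover have "f ` B' \<subset> M"
    using \<open>B' \<subset> f ` M\<close> ff by (metis image_mono psubset_eq)
  ultimately show False
    using M(2) by blast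
qed

lemma uminus_in_MA:
  assumes "minimal_markov_basis A M" "u \<in> M"
  shows "- u \<in> MA A"
proof -
  define f where "f x = (if x = u \<or> x = - u then - x else x)" for x
  have "minimal_markov_basis A (f ` M)"
    by (rule minimal_markov_basis_sign_change[OF assms(1)]) (simp_all add: f_def)
  moreover have "- u \<in> f ` M"
    using assms(2) unfolding f_def by (intro image_eqI[of _ _ u]) simp_all
  ultimately show ?thesis
    by (auto simp: MA_def)
qed

section \<open>Finite fibers and existence of minimal Markov bases\<close>

lemma nat_seq_has_incseq_subseq:
  fixes g :: "nat \<Rightarrow> nat"
  shows "\<exists>r. strict_mono r \<and> incseq (\<lambda>n. g (r n))"
proof -
  obtain r where r: "strict_mono r" "monoseq (\<lambda>n. g (r n))"
    using seq_monosub by blast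
  show ?thesis
  proof (cases "incseq (\<lambda>n. g (r n))")
    case False
    with r(2) have dec: "decseq (\<lambda>n. g (r n))"
      by (simp add: monoseq_iff)
    obtain N where N: "\<forall>n. g (r N) \<le> g (r n)"
      using ex_has_least_nat[of "\<lambda>_. True" 0 "\<lambda>n. g (r n)"] by blast
    have "g (r (n + N)) = g (r N)" for n
      using decseqD[OF dec le_add2[of N n]] N by (simp add: le_antisym)
    then have "incseq (\<lambda>n. g (r (n + N)))"
      by (simp add: incseq_def)
    moreover have "strict_mono (\<lambda>n. r (n + N))"
      using r(1) by (simp add: strict_mono_def)
    ultimately show ?thesis
      by blast
  qed (use r in blast)
qed

lemma Dickson:
  fixes f :: "nat \<Rightarrow> 'n::finite \<Rightarrow> nat"
  shows "\<exists>i j. i < j \<and> f i \<le> f j"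
proof -
  have "\<exists>r. strict_mono r \<and> (\<forall>k\<in>K. incseq (\<lambda>n. f (r n) k))" for K :: "'n set"
    using finite[of K]
  proof (induction K rule: finite_induct)
    case empty
    show ?case
      using strict_mono_id by blast
  next
    case (insert k K)
    then obtain r where r: "strict_mono r" "\<forall>k\<in>K. incseq (\<lambda>n. f (r n) k)"
      by blast
    obtain s where s: "strict_mono s" "incseq (\<lambda>n. f (r (s n)) k)"
      using nat_seq_has_incseq_subseq[of "\<lambda>n. f (r n) k"] by blast
    have "incseq (\<lambda>n. f (r (s n)) k')" if "k' \<in> K" for k'
    proof -
      have "incseq (\<lambda>n. f (r n) k')"
        using r(2) that by blast
      then show ?thesis
        using strict_mono_less_eq[OF s(1)] unfolding incseq_def by metis
    qed
    moreover have "strict_mono (\<lambda>n. r (s n))"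
      using r(1) s(1) by (simp add: strict_mono_def)
    ultimately show ?case
      using s(2) by (intro exI[of _ "\<lambda>n. r (s n)"]) simp
  qed
  from this[of UNIV] obtain r where r: "strict_mono r" "\<forall>k. incseq (\<lambda>n. f (r n) k)"
    by blast
  have "f (r 0) \<le> f (r 1)"
    using r(2) by (simp add: le_fun_def incseq_def)
  moreover have "r 0 < r 1"
    using r(1) by (simp add: strict_mono_def)
  ultimately show ?thesis
    by blast
qed

definition fiber :: "('d::finite \<Rightarrow> 'n::finite \<Rightarrow> int) \<Rightarrow> ('n \<Rightarrow> int) \<Rightarrow> ('n \<Rightarrow> int) set" where
  "fiber A x = {p. natvec p \<and> p - x \<in> kerA A}"

lemma finite_fiber:
  assumes pointed: "kerA A \<inter> {u. natvec u} = {0}"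
  shows "finite (fiber A x)"
proof (rule ccontr)
  assume "infinite (fiber A x)"
  then obtain f :: "nat \<Rightarrow> _" where f: "inj f" "range f \<subseteq> fiber A x"
    using infinite_countable_subset by blast
  obtain i j where ij: "i < j" "(\<lambda>k. nat (f i k)) \<le> (\<lambda>k. nat (f j k))"
    using Dickson[of "\<lambda>i k. nat (f i k)"] by blast
  have "natvec (f i)" "natvec (f j)" "f i - x \<in> kerA A" "f j - x \<in> kerA A"
    using f(2) by (auto simp: fiber_def)
  moreover have "f i k \<le> f j k" for k
    using le_funD[OF ij(2), of k] nat_le_eq_zle[of "f i k" "f j k"] \<open>natvec (f j)\<close>
    by (simp add: natvec_def)
  ultimately have "natvec (f j - f i)" "f j - f i \<in> kerA A"
    using diff_in_kerA[of "f j - x" A "f i - x"] by (simp_all add: natvec_def)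
  then have "f j - f i = 0"
    using pointed by blast
  then have "f j = f i"
    by simp
  with f(1) ij(1) show False
    by (metis inj_eq less_irrefl)
qed

lemma reachable_in_fiber:
  assumes "reachable B x y" "B \<subseteq> kerA A" "natvec x"
  shows "y \<in> fiber A x"
  using assms(1)
proof (induction rule: rtranclp_induct)
  case base
  show ?case
    using assms(3) zero_in_kerA by (simp add: fiber_def)
next
  case (step y z)
  then have "y - z \<in> kerA A"
    using assms(2) uminus_in_kerA[of "z - y" A] by (auto simp: move_def)
  with step show ?case
    using diff_in_kerA[of "y - x" A "y - z"] by (auto simp: fiber_def move_def)
qed

lemma reachable_restrict:
  assumes "reachable B x y" "\<And>p q. reachable B x p \<Longrightarrow> move B p q \<Longrightarrow> move B' p q"
  shows "reachable B' x y"
  using assms(1)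
proof (induction rule: rtranclp_induct)
  case (step y z)
  then have "move B' y z"
    using assms(2) by blast
  with step.IH show ?case
    by (meson rtranclp.rtrancl_into_rtrancl)
qed simp

lemma chain_Int_finite_subset_Inter:
  assumes "finite R" "\<C> \<noteq> {}" and chain: "\<And>X Y. X \<in> \<C> \<Longrightarrow> Y \<in> \<C> \<Longrightarrow> X \<subseteq> Y \<or> Y \<subseteq> X"
  shows "\<exists>X0\<in>\<C>. X0 \<inter> R \<subseteq> \<Inter>\<C>"
proof -
  obtain X1 where "X1 \<in> \<C>"
    using assms(2) by blast
  then obtain X0 where X0: "X0 \<in> \<C>" "\<forall>Y\<in>\<C>. card (X0 \<inter> R) \<le> card (Y \<inter> R)"
    using ex_has_least_nat[of "\<lambda>X. X \<in> \<C>" X1 "\<lambda>X. card (X \<inter> R)"] by blast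
  have "X0 \<inter> R \<subseteq> Y" if "Y \<in> \<C>" for Y
  proof (cases "X0 \<subseteq> Y")
    case False
    with chain[OF X0(1) that] have "Y \<inter> R \<subseteq> X0 \<inter> R"
      by blast
    then have "Y \<inter> R = X0 \<inter> R"
      using X0(2) that \<open>finite R\<close> by (intro card_seteq) auto
    then show ?thesis
      by blast
  qed blast
  with X0(1) show ?thesis
    by blast
qed

text \<open>Along a chain of Markov bases the finitely many moves inside one fiber stabilise, so the
  intersection still connects that fiber.\<close>

lemma markov_basis_Inter_chain:
  assumes pointed: "kerA A \<inter> {u. natvec u} = {0}"
    and "\<C> \<noteq> {}" "\<And>X. X \<in> \<C> \<Longrightarrow> markov_basis A X"
    and chain: "\<And>X Y. X \<in> \<C> \<Longrightarrow> Y \<in> \<C> \<Longrightarrow> X \<subseteq> Y \<or> Y \<subseteq> X"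
  shows "markov_basis A (\<Inter>\<C>)"
proof -
  have "X \<subseteq> kerA A" if "X \<in> \<C>" for X
    using assms(3)[OF that] by (rule markov_basis_subset_kerA)
  with assms(2) have ker: "\<Inter>\<C> \<subseteq> kerA A"
    by blast
  have "reachable (\<Inter>\<C>) x y" if "natvec x" "natvec y" "x - y \<in> kerA A" for x y
  proof -
    define R where "R = (\<lambda>(p, q). p - q) ` (fiber A x \<times> fiber A x)"
    have "finite R"
      using finite_fiber[OF pointed] by (simp add: R_def)
    then obtain X0 where X0: "X0 \<in> \<C>" "X0 \<inter> R \<subseteq> \<Inter>\<C>"
      using chain_Int_finite_subset_Inter[OF _ assms(2) chain] by blast
    have X0_ker: "X0 \<subseteq> kerA A"
      using assms(3)[OF X0(1)] by (rule markov_basis_subset_kerA)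
    have "reachable X0 x y"
      using markov_basis_imp_connects_fibers[OF assms(3)[OF X0(1)]] that
      by (simp add: connects_fibers_def)
    then show ?thesis
    proof (rule reachable_restrict)
      fix p q
      assume "reachable X0 x p" "move X0 p q"
      then have "p \<in> fiber A x" "q \<in> fiber A x"
        using reachable_in_fiber[OF _ X0_ker \<open>natvec x\<close>]
          rtranclp.rtrancl_into_rtrancl[of "move X0" x p q] by simp_all
      then have "p - q \<in> R" "q - p \<in> R"
        by (auto simp: R_def)
      with \<open>move X0 p q\<close> X0(2) show "move (\<Inter>\<C>) p q"
        by (auto simp: move_def)
    qed
  qed
  with ker show ?thesis
    by (simp add: connects_fibers_def connects_fibers_imp_markov_basis)
qed

lemma markov_basis_Diff_Union_chain:
  assumes pointed: "kerA A \<inter> {u. natvec u} = {0}"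
    and "\<C> \<noteq> {}" "\<And>X. X \<in> \<C> \<Longrightarrow> markov_basis A (B - X)"
    and chain: "\<And>X Y. X \<in> \<C> \<Longrightarrow> Y \<in> \<C> \<Longrightarrow> X \<subseteq> Y \<or> Y \<subseteq> X"
  shows "markov_basis A (B - \<Union>\<C>)"
proof -
  have "markov_basis A (\<Inter>((\<lambda>X. B - X) ` \<C>))"
  proof (rule markov_basis_Inter_chain[OF pointed])
    show "(\<lambda>X. B - X) ` \<C> \<noteq> {}"
      using assms(2) by blast
    show "markov_basis A Y" if "Y \<in> (\<lambda>X. B - X) ` \<C>" for Y
      using that assms(3) by blast
    show "Y \<subseteq> Z \<or> Z \<subseteq> Y"
      if YZ: "Y \<in> (\<lambda>X. B - X) ` \<C>" "Z \<in> (\<lambda>X. B - X) ` \<C>" for Y Z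
    proof -
      obtain X X' where "X \<in> \<C>" "X' \<in> \<C>" "Y = B - X" "Z = B - X'"
        using YZ by blast
      with chain[of X X'] show ?thesis
        by blast
    qed
  qed
  moreover have "\<Inter>((\<lambda>X. B - X) ` \<C>) = B - \<Union>\<C>"
    using assms(2) by blast
  ultimately show ?thesis
    by simp
qed

lemma exists_minimal_markov_basis_subset:
  assumes pointed: "kerA A \<inter> {u. natvec u} = {0}" and "markov_basis A B"
  shows "\<exists>M\<subseteq>B. minimal_markov_basis A M"
proof -
  define \<A> where "\<A> = {X. X \<subseteq> B \<and> markov_basis A (B - X)}"
  have "\<exists>R\<in>\<A>. \<forall>X\<in>\<A>. R \<subseteq> X \<longrightarrow> X = R"
  proof (rule subset_Zorn_nonempty)
    show "\<A> \<noteq> {}"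
      using assms(2) by (auto simp: \<A>_def)
    show "\<Union>\<C> \<in> \<A>" if "\<C> \<noteq> {}" "subset.chain \<A> \<C>" for \<C>
    proof -
      have sub: "\<C> \<subseteq> \<A>" and chain: "\<forall>X\<in>\<C>. \<forall>Y\<in>\<C>. X \<subseteq> Y \<or> Y \<subseteq> X"
        using that(2) by (simp_all add: subset_chain_def)
      have "markov_basis A (B - \<Union>\<C>)"
      proof (rule markov_basis_Diff_Union_chain[OF pointed that(1)])
        show "markov_basis A (B - X)" if "X \<in> \<C>" for X
          using sub that by (auto simp: \<A>_def)
        show "X \<subseteq> Y \<or> Y \<subseteq> X" if "X \<in> \<C>" "Y \<in> \<C>" for X Y
          using chain that by blast
      qed
      moreover have "\<Union>\<C> \<subseteq> B"
        using sub by (auto simp: \<A>_def)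
      ultimately show ?thesis
        by (simp add: \<A>_def)
    qed
  qed
  then obtain R where R: "R \<subseteq> B" "markov_basis A (B - R)" "\<forall>X\<in>\<A>. R \<subseteq> X \<longrightarrow> X = R"
    by (auto simp: \<A>_def)
  have "\<not> markov_basis A B'" if "B' \<subset> B - R" for B'
  proof
    assume "markov_basis A B'"
    moreover have "B - (B - B') = B'"
      using that by blast
    ultimately have "B - B' \<in> \<A>" "R \<subseteq> B - B'"
      using that R(1) by (auto simp: \<A>_def)
    with R(3) that show False
      by blast
  qed
  with R(2) show ?thesis
    by (intro exI[of _ "B - R"]) (auto simp: minimal_markov_basis_def)
qed

section \<open>Fibers of indispensable moves\<close>

lemma markov_basis_split_move:
  assumes "markov_basis A M" "z \<in> kerA A" "m \<in> fiber A (posp z)"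
  shows "markov_basis A (insert (posp z - m) (insert (m - negp z) (M - {z, - z})))"
    (is "markov_basis A ?M'")
proof (rule markov_basis_if_moves_reachable[OF assms(1)])
  have m: "natvec m" "m - posp z \<in> kerA A"
    using assms(3) by (simp_all add: fiber_def)
  have "posp z - m \<in> kerA A"
    using uminus_in_kerA[OF m(2)] by simp
  moreover have "m - negp z = (m - posp z) + z"
    by (auto simp: fun_eq_iff posp_def negp_def max_def)
  then have "m - negp z \<in> kerA A"
    using add_in_kerA[OF m(2) assms(2)] by argo
  ultimately show "?M' \<subseteq> kerA A"
    using markov_basis_subset_kerA[OF assms(1)] by blast
  have "move ?M' (posp z) m" "move ?M' m (negp z)"
    using m(1) by (simp_all add: move_def)
  then have z_reachable: "reachable ?M' (posp z) (negp z)"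
    by (meson r_into_rtranclp rtranclp_trans)
  fix p q
  assume pq: "move M p q"
  show "reachable ?M' p q"
  proof (cases "p - q \<in> {z, - z}")
    case True
    then consider "p - q = z" | "p - q = - z"
      by blast
    then have "reachable ?M' (posp (p - q)) (negp (p - q))"
      by cases (simp_all add: z_reachable reachable_sym)
    moreover have "natvec p" "natvec q"
      using pq by (simp_all add: move_def)
    ultimately show ?thesis
      by (rule reachable_if_reachable_posp_negp)
  next
    case False
    then have "- (p - q) \<notin> {z, - z}"
      by (metis insert_iff minus_minus singleton_iff)
    then have "q - p \<notin> {z, - z}"
      by simp
    with False pq have "move ?M' p q"
      unfolding move_def by blast
    then show ?thesis
      by blast
  qed
qed

lemma split_moves_neq_pm:
  assumes pointed: "kerA A \<inter> {u. natvec u} = {0}" and z: "z \<in> kerA A"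
    and m: "m \<in> fiber A (posp z)" and m_other: "m \<notin> {posp z, negp z}"
  shows "posp z - m \<notin> {z, - z}" "m - negp z \<notin> {z, - z}"
proof -
  have "z \<noteq> 0"
  proof
    assume "z = 0"
    then have "posp z = 0"
      by (simp add: posp_def fun_eq_iff)
    with m have "m \<in> kerA A \<inter> {u. natvec u}"
      by (simp add: fiber_def)
    with pointed have "m = 0"
      by simp
    with \<open>posp z = 0\<close> m_other show False
      by simp
  qed
  then have "z \<notin> kerA A \<inter> {u. natvec u}" "- z \<notin> kerA A \<inter> {u. natvec u}"
    using pointed by simp_all
  then have not_natvec: "\<not> natvec z" "\<not> natvec (- z)"
    using z uminus_in_kerA[OF z] by simp_all
  show "posp z - m \<notin> {z, - z}"
  proof
    assume "posp z - m \<in> {z, - z}"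
    then consider "m = posp z - z" | "m = posp z + z"
      by (auto simp: algebra_simps)
    then show False
    proof cases
      case 1
      with m_other show False
        by (simp add: posp_minus_self)
    next
      case 2
      with m not_natvec natvec_of_natvec_posp_plus[of z] show False
        by (simp add: fiber_def)
    qed
  qed
  show "m - negp z \<notin> {z, - z}"
  proof
    assume "m - negp z \<in> {z, - z}"
    then consider "m = negp z + z" | "m = posp (- z) + - z"
      by (auto simp: algebra_simps)
    then show False
    proof cases
      case 1
      with m_other show False
        by (simp add: negp_plus_self)
    next
      case 2
      with m not_natvec natvec_of_natvec_posp_plus[of "- z"] show False
        by (simp add: fiber_def)
    qed
  qed
qed

text \<open>A third point \<open>m\<close> in the fiber of \<open>z\<^sup>+\<close> would allow replacing the move \<open>z\<close> by the two
  moves \<open>z\<^sup>+ - m\<close> and \<open>m - z\<^sup>-\<close>, and the resulting Markov basis would contain a minimal one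
  avoiding \<open>z\<close> and \<open>-z\<close>.\<close>

lemma fiber_posp_eq_if_indispensable:
  assumes pointed: "kerA A \<inter> {u. natvec u} = {0}" and z: "z \<in> kerA A"
    and indispensable: "\<And>M. minimal_markov_basis A M \<Longrightarrow> z \<in> M \<or> - z \<in> M"
  shows "fiber A (posp z) = {posp z, negp z}"
proof
  have "negp z - posp z = - z"
    by (metis minus_diff_eq posp_minus_negp)
  then show "{posp z, negp z} \<subseteq> fiber A (posp z)"
    using zero_in_kerA[of A] uminus_in_kerA[OF z] by (simp add: fiber_def)
  show "fiber A (posp z) \<subseteq> {posp z, negp z}"
  proof
    fix m
    assume m: "m \<in> fiber A (posp z)"
    show "m \<in> {posp z, negp z}"
    proof (rule ccontr)
      assume "m \<notin> {posp z, negp z}"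
      note split = split_moves_neq_pm[OF pointed z m this]
      let ?M' = "insert (posp z - m) (insert (m - negp z) (kerA A - {z, - z}))"
      obtain M where M: "M \<subseteq> ?M'" "minimal_markov_basis A M"
        using exists_minimal_markov_basis_subset[OF pointed
            markov_basis_split_move[OF markov_basis_kerA z m]] by blast
      have "z \<notin> ?M'" "- z \<notin> ?M'"
        using split by auto
      with M(1) have "z \<notin> M" "- z \<notin> M"
        by blast+
      with indispensable[OF M(2)] show False
        by blast
    qed
  qed
qed

lemma two_point_fiber_no_split:
  assumes fiber: "fiber A (posp z) = {posp z, negp z}" and z: "z \<in> kerA A"
    and u: "u \<in> kerA A" "u \<noteq> 0" "u \<noteq> z"
  shows "\<not> natvec (posp z - u)" "\<not> natvec (negp z + u)"
proof -
  have "posp z - u \<noteq> posp z" "posp z - u \<noteq> negp z"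
    using u(2,3) posp_minus_negp[of z] by (auto simp: algebra_simps)
  moreover have "posp z - u \<in> fiber A (posp z)" if "natvec (posp z - u)"
    using that uminus_in_kerA[OF u(1)] by (simp add: fiber_def)
  ultimately show "\<not> natvec (posp z - u)"
    using fiber by blast
  have eq: "negp z + u - posp z = u - z"
    using posp_minus_negp[of z] by (simp add: algebra_simps)
  have "negp z + u \<in> fiber A (posp z)" if "natvec (negp z + u)"
    unfolding fiber_def mem_Collect_eq eq using that diff_in_kerA[OF u(1) z] by simp
  moreover have "negp z + u \<noteq> posp z" "negp z + u \<noteq> negp z"
    using u(2,3) posp_minus_negp[of z] by (auto simp: algebra_simps)
  ultimately show "\<not> natvec (negp z + u)"
    using fiber by blast
qed

lemma two_point_fiber_in_SA:
  assumes "fiber A (posp z) = {posp z, negp z}" "z \<in> kerA A" "z \<noteq> 0"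
  shows "z \<in> SA A"
proof -
  have False if uv: "u \<in> kerA A - {0}" "v \<in> kerA A - {0}" "z = u + v"
    "\<forall>i. u i > 0 \<longrightarrow> v i \<ge> 0" for u v
  proof -
    have "u i \<le> posp z i" for i
      using uv(4)[rule_format, of i] uv(3) by (cases "u i > 0") (auto simp: posp_def)
    then have "natvec (posp z - u)"
      by (simp add: natvec_def)
    moreover have "u \<noteq> z"
      using uv(2,3) by auto
    ultimately show False
      using two_point_fiber_no_split(1)[OF assms(1,2)] uv(1) by blast
  qed
  with assms(2,3) show ?thesis
    unfolding SA_def by blast
qed

lemma two_point_fiber_in_DA:
  assumes "fiber A (posp z) = {posp z, negp z}" "z \<in> kerA A" "z \<noteq> 0"
  shows "z \<in> DA A"
proof -
  have "\<not> pos_dist_decomp A z"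
  proof
    assume "pos_dist_decomp A z"
    then obtain u v where uv: "u \<in> kerA A - {0}" "v \<in> kerA A - {0}" "z = u + v"
      "posp u \<le> posp z"
      by (auto simp: pos_dist_decomp_def)
    have "0 \<le> posp z i - u i" for i
      using le_funD[OF uv(4), of i] by (auto simp: posp_def max_def split: if_splits)
    then have "natvec (posp z - u)" "u \<noteq> z"
      using uv(2,3) by (auto simp: natvec_def)
    with uv(1) show False
      using two_point_fiber_no_split(1)[OF assms(1,2)] by blast
  qed
  moreover have "\<not> neg_dist_decomp A z"
  proof
    assume "neg_dist_decomp A z"
    then obtain u v where uv: "u \<in> kerA A - {0}" "v \<in> kerA A - {0}" "z = u + v"
      "negp u \<le> negp z"
      by (auto simp: neg_dist_decomp_def)
    have "0 \<le> negp z i + u i" for i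
      using le_funD[OF uv(4), of i] by (auto simp: negp_def max_def split: if_splits)
    then have "natvec (negp z + u)" "u \<noteq> z"
      using uv(2,3) by (auto simp: natvec_def)
    with uv(1) show False
      using two_point_fiber_no_split(2)[OF assms(1,2)] by blast
  qed
  ultimately show ?thesis
    using assms(2,3) by (simp add: DA_def)
qed

section \<open>Distance reduction\<close>

lemma reduces_distance_uminus [simp]: "reduces_distance (- u) z \<longleftrightarrow> reduces_distance u z"
proof -
  have "reduces_distance (- v) z" if rd: "reduces_distance v z" for v
  proof -
    obtain p q e where pq: "(p, q) \<in> {(posp z, negp z), (negp z, posp z)}" "e \<in> {1, -1::int}"
      "natvec (\<lambda>i. p i + e * v i)" "norm1 (\<lambda>i. p i + e * v i - q i) < norm1 z"
      using rd unfolding reduces_distance_def by (elim exE conjE) (rule that)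
    have "(\<lambda>i. p i + (- e) * (- v) i) = (\<lambda>i. p i + e * v i)"
      "(\<lambda>i. p i + (- e) * (- v) i - q i) = (\<lambda>i. p i + e * v i - q i)"
      by simp_all
    moreover have "- e \<in> {1, -1}"
      using pq(2) by auto
    ultimately show ?thesis
      using pq(1,3,4) unfolding reduces_distance_def
      by (intro exI[of _ p] exI[of _ q] exI[of _ "- e"]) simp
  qed
  from this[of u] this[of "- u"] show ?thesis
    by auto
qed

lemma reduces_distanceE:
  assumes "reduces_distance u z"
  obtains w where "w = u \<or> w = - u" "natvec (posp z + w)" "norm1 (z + w) < norm1 z"
  | w where "w = u \<or> w = - u" "natvec (negp z + w)" "norm1 (z - w) < norm1 z"
proof -
  obtain p q e where pq: "(p, q) \<in> {(posp z, negp z), (negp z, posp z)}" "e \<in> {1, -1::int}"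
    "natvec (\<lambda>i. p i + e * u i)" "norm1 (\<lambda>i. p i + e * u i - q i) < norm1 z"
    using assms unfolding reduces_distance_def by (elim exE conjE) (rule that)
  define w where "w = (\<lambda>i. e * u i)"
  have w: "w = u \<or> w = - u"
    using pq(2) by (auto simp: w_def fun_eq_iff)
  have "(\<lambda>i. p i + e * u i) = p + w" "(\<lambda>i. p i + e * u i - q i) = p + w - q"
    by (simp_all add: w_def fun_eq_iff)
  with pq(3,4) have pw: "natvec (p + w)" "norm1 (p + w - q) < norm1 z"
    by simp_all
  from pq(1) consider "p = posp z" "q = negp z" | "p = negp z" "q = posp z"
    by blast
  then show ?thesis
  proof cases
    case 1
    have "posp z + w - negp z = z + w"
      by (auto simp: fun_eq_iff posp_def negp_def max_def)
    with pw show ?thesis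
      unfolding 1 by (intro that(1)[OF w]) simp_all
  next
    case 2
    have "negp z + w - posp z = - (z - w)"
      by (auto simp: fun_eq_iff posp_def negp_def max_def)
    with pw show ?thesis
      unfolding 2 by (intro that(2)[OF w]) (simp_all only: norm1_uminus)
  qed
qed

lemma not_in_SA_DA_if_posp_move:
  assumes "z \<in> kerA A" "w \<in> kerA A" "w \<noteq> - z" "natvec (posp z + w)" "norm1 (z + w) < norm1 z"
  shows "z \<notin> SA A \<and> z \<notin> DA A"
proof -
  have "w \<noteq> 0" "z + w \<noteq> 0"
    using assms(3,5) add_eq_0_iff[of z w] by auto
  then have ker: "- w \<in> kerA A - {0}" "z + w \<in> kerA A - {0}"
    using assms(1,2) uminus_in_kerA add_in_kerA by auto
  have le: "- w i \<le> posp z i" for i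
    using assms(4)[unfolded natvec_def, rule_format, of i] by simp
  have "(z + w) i \<ge> 0" if "(- w) i > 0" for i
    using le[of i] that by (auto simp: posp_def max_def split: if_splits)
  then have "\<forall>i. (- w) i > 0 \<longrightarrow> (z + w) i \<ge> 0"
    by blast
  moreover have "z = - w + (z + w)"
    by simp
  ultimately have not_SA: "z \<notin> SA A"
    using ker unfolding SA_def mem_Collect_eq by blast
  have "posp (- w) i \<le> posp z i" for i
    using le[of i] by (auto simp: posp_def max_def)
  then have "posp (- w) \<le> posp z"
    by (simp add: le_fun_def)
  with ker assms(5) have "pos_dist_decomp A z"
    unfolding pos_dist_decomp_def by (intro exI[of _ "- w"] exI[of _ "z + w"]) auto
  with not_SA show ?thesis
    by (simp add: DA_def)
qed

lemma not_in_SA_DA_if_negp_move: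
  assumes "z \<in> kerA A" "w \<in> kerA A" "w \<noteq> z" "natvec (negp z + w)" "norm1 (z - w) < norm1 z"
  shows "z \<notin> SA A \<and> z \<notin> DA A"
proof -
  have ker: "w \<in> kerA A - {0}" "z - w \<in> kerA A - {0}"
    using assms diff_in_kerA by auto
  have le: "- w i \<le> negp z i" for i
    using assms(4)[unfolded natvec_def, rule_format, of i] by simp
  have "w i \<ge> 0" if "(z - w) i > 0" for i
    using le[of i] that by (auto simp: negp_def max_def split: if_splits)
  then have "\<forall>i. (z - w) i > 0 \<longrightarrow> w i \<ge> 0"
    by blast
  moreover have "z = (z - w) + w"
    by simp
  ultimately have not_SA: "z \<notin> SA A"
    using ker unfolding SA_def mem_Collect_eq by blast
  have "negp w i \<le> negp z i" for i
    using le[of i] by (auto simp: negp_def max_def)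
  then have "negp w \<le> negp z"
    by (simp add: le_fun_def)
  with ker assms(5) have "neg_dist_decomp A z"
    unfolding neg_dist_decomp_def by (intro exI[of _ w] exI[of _ "z - w"]) auto
  with not_SA show ?thesis
    by (simp add: DA_def)
qed

lemma reduces_distance_imp_not_SA_DA:
  assumes "z \<in> kerA A" "u \<in> kerA A" "reduces_distance u z" "u \<noteq> z" "u \<noteq> - z"
  shows "z \<notin> SA A \<and> z \<notin> DA A"
proof -
  have w: "w \<in> kerA A" "w \<noteq> z" "w \<noteq> - z" if "w = u \<or> w = - u" for w
    using that assms(2,4,5) uminus_in_kerA by auto
  from assms(3) show ?thesis
  proof (cases rule: reduces_distanceE)
    case (1 w)
    with w[OF 1(1)] show ?thesis
      using not_in_SA_DA_if_posp_move[OF assms(1)] by blast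
  next
    case (2 w)
    with w[OF 2(1)] show ?thesis
      using not_in_SA_DA_if_negp_move[OF assms(1)] by blast
  qed
qed

lemma distance_reducing_contains:
  assumes "distance_reducing A B" "z \<in> SA A \<union> DA A"
  shows "z \<in> B \<or> - z \<in> B"
proof -
  have "z \<in> kerA A" "z \<noteq> 0"
    using assms(2) by (auto simp: SA_def DA_def)
  then obtain u where u: "u \<in> B" "reduces_distance u z"
    using assms(1) by (auto simp: distance_reducing_def)
  moreover have "u \<in> kerA A"
    using u(1) assms(1) by (auto simp: distance_reducing_def)
  ultimately have "u = z \<or> u = - z"
    using reduces_distance_imp_not_SA_DA \<open>z \<in> kerA A\<close> assms(2) by blast
  with u(1) show ?thesis
    by auto
qed

lemma minimal_distance_reducing_if_sign_free:
  assumes "distance_reducing A B" "B \<subseteq> DA A" "\<forall>x\<in>B. - x \<notin> B"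
  shows "minimal_distance_reducing A B"
  unfolding minimal_distance_reducing_def
proof (intro conjI allI impI notI)
  show "distance_reducing A B"
    by (rule assms(1))
  fix B'
  assume "B' \<subset> B" "distance_reducing A B'"
  then obtain x where "x \<in> B" "x \<notin> B'"
    by blast
  with assms(2) have "- x \<in> B'"
    using distance_reducing_contains[OF \<open>distance_reducing A B'\<close>, of x] by blast
  with \<open>B' \<subset> B\<close> \<open>x \<in> B\<close> assms(3) show False
    by blast
qed

lemma calDA_subset:
  assumes "distance_reducing A M" "M \<subseteq> DA A"
  shows "calDA A \<subseteq> M \<union> uminus ` M"
proof
  fix x
  assume "x \<in> calDA A"
  then obtain B where B: "minimal_distance_reducing A B" "x \<in> B"
    by (auto simp: calDA_def)
  then have dr_B: "distance_reducing A B"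
    by (simp add: minimal_distance_reducing_def)
  have dr_restrict: "distance_reducing A (B \<inter> (M \<union> uminus ` M))"
    unfolding distance_reducing_def
  proof (intro conjI ballI impI)
    show "B \<inter> (M \<union> uminus ` M) \<subseteq> kerA A"
      using dr_B by (auto simp: distance_reducing_def)
    fix w
    assume "w \<in> kerA A" "w \<noteq> 0"
    then obtain b where b: "b \<in> M" "reduces_distance b w"
      using assms(1) by (auto simp: distance_reducing_def)
    then have "b \<in> B \<or> - b \<in> B"
      using distance_reducing_contains[OF dr_B] assms(2) by blast
    then show "\<exists>v\<in>B \<inter> (M \<union> uminus ` M). reduces_distance v w"
    proof
      assume "b \<in> B"
      with b show ?thesis
        by blast
    next
      assume "- b \<in> B"
      moreover have "- b \<in> uminus ` M" "reduces_distance (- b) w"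
        using b by simp_all
      ultimately show ?thesis
        by blast
    qed
  qed
  have "\<not> B \<inter> (M \<union> uminus ` M) \<subset> B"
  proof
    assume "B \<inter> (M \<union> uminus ` M) \<subset> B"
    with B(1) dr_restrict show False
      by (simp add: minimal_distance_reducing_def)
  qed
  then have "B \<subseteq> M \<union> uminus ` M"
    by auto
  with B(2) show "x \<in> M \<union> uminus ` M"
    by blast
qed

section \<open>Minimal Markov bases unique up to sign\<close>

definition sign_variant :: "('n \<Rightarrow> int) set \<Rightarrow> ('n \<Rightarrow> int) set \<Rightarrow> bool" where
  "sign_variant M M' \<longleftrightarrow> (\<exists>f. (\<forall>x\<in>M. f x = x \<or> f x = - x) \<and> M' = f ` M)"

lemma sign_variant_sign_factors:
  assumes "\<forall>u\<in>M. \<sigma> u = 1 \<or> \<sigma> u = -1"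
  shows "sign_variant M ((\<lambda>u. (\<lambda>i. \<sigma> u * u i)) ` M)"
proof -
  have "(\<lambda>i. \<sigma> u * u i) = u \<or> (\<lambda>i. \<sigma> u * u i) = - u" if "u \<in> M" for u
    using bspec[OF assms that] by (elim disjE) (simp_all add: fun_eq_iff)
  then show ?thesis
    unfolding sign_variant_def by (intro exI[of _ "\<lambda>u i. \<sigma> u * u i"]) blast
qed

lemma sign_variant_subset: "sign_variant M M' \<Longrightarrow> M' \<subseteq> M \<union> uminus ` M"
  by (auto simp: sign_variant_def)

lemma sign_variant_meets:
  fixes M :: "('n \<Rightarrow> int) set"
  assumes "sign_variant M M'" "z \<in> M \<union> uminus ` M"
  shows "z \<in> M' \<or> - z \<in> M'"
proof -
  obtain f where f: "\<forall>x\<in>M. f x = x \<or> f x = - x" "M' = f ` M"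
    using assms(1) by (auto simp: sign_variant_def)
  obtain u where "u \<in> M" "z = u \<or> z = - u"
    using assms(2) by blast
  moreover have "f u = u \<or> f u = - u"
    using f(1) \<open>u \<in> M\<close> by blast
  ultimately have "f u = z \<or> f u = - z"
    by auto
  with \<open>u \<in> M\<close> f(2) show ?thesis
    by (metis image_eqI)
qed

lemma distance_reducing_sign_variant:
  assumes "distance_reducing A M" "sign_variant M M'"
  shows "distance_reducing A M'"
proof -
  obtain f where f: "\<forall>x\<in>M. f x = x \<or> f x = - x" "M' = f ` M"
    using assms(2) by (auto simp: sign_variant_def)
  show ?thesis
    unfolding distance_reducing_def
  proof (intro conjI ballI impI)
    show "M' \<subseteq> kerA A"
      using assms(1) f uminus_in_kerA by (fastforce simp: distance_reducing_def)
    fix z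
    assume "z \<in> kerA A" "z \<noteq> 0"
    then obtain u where "u \<in> M" "reduces_distance u z"
      using assms(1) by (auto simp: distance_reducing_def)
    moreover from this have "reduces_distance (f u) z"
      using f(1) by (metis reduces_distance_uminus)
    ultimately show "\<exists>v\<in>M'. reduces_distance v z"
      using f(2) by blast
  qed
qed

lemma signed_subset_SA_DA:
  assumes pointed: "kerA A \<inter> {u. natvec u} = {0}" and minM: "minimal_markov_basis A M"
    and variants: "\<And>M'. minimal_markov_basis A M' \<Longrightarrow> sign_variant M M'"
  shows "M \<union> uminus ` M \<subseteq> SA A \<inter> DA A"
proof
  fix z
  assume z: "z \<in> M \<union> uminus ` M"
  have "z \<in> kerA A" "z \<noteq> 0"
    using z markov_basis_subset_kerA[OF minimal_markov_basisD(1)[OF minM]]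
      zero_notin_minimal_markov_basis[OF minM] uminus_in_kerA by auto
  moreover have "fiber A (posp z) = {posp z, negp z}"
    using fiber_posp_eq_if_indispensable[OF pointed \<open>z \<in> kerA A\<close>]
      sign_variant_meets[OF variants z] by blast
  ultimately show "z \<in> SA A \<inter> DA A"
    using two_point_fiber_in_SA two_point_fiber_in_DA by blast
qed

lemma SA_DA_subset_signed:
  assumes "distance_reducing A M"
  shows "SA A \<union> DA A \<subseteq> M \<union> uminus ` M"
  using distance_reducing_contains[OF assms] by (metis UnI1 UnI2 image_eqI minus_minus subsetI)

lemma MA_eq_signed:
  assumes "minimal_markov_basis A M"
    and "\<And>M'. minimal_markov_basis A M' \<Longrightarrow> sign_variant M M'"
  shows "MA A = M \<union> uminus ` M"
proof
  show "MA A \<subseteq> M \<union> uminus ` M"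
    using assms(2) sign_variant_subset by (auto simp: MA_def)
  have "M \<subseteq> MA A"
    using assms(1) by (auto simp: MA_def)
  moreover have "uminus ` M \<subseteq> MA A"
    using uminus_in_MA[OF assms(1)] by blast
  ultimately show "M \<union> uminus ` M \<subseteq> MA A"
    by blast
qed

lemma MA_subset_calDA:
  assumes "distance_reducing A M" "\<And>M'. minimal_markov_basis A M' \<Longrightarrow> sign_variant M M'"
    and "M \<union> uminus ` M \<subseteq> DA A"
  shows "MA A \<subseteq> calDA A"
proof
  fix x
  assume "x \<in> MA A"
  then obtain M' where M': "minimal_markov_basis A M'" "x \<in> M'"
    by (auto simp: MA_def)
  have "distance_reducing A M'"
    using distance_reducing_sign_variant[OF assms(1) assms(2)[OF M'(1)]] .
  moreover have "M' \<subseteq> DA A"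
    using sign_variant_subset[OF assms(2)[OF M'(1)]] assms(3) by blast
  ultimately have "minimal_distance_reducing A M'"
    using uminus_notin_minimal_markov_basis[OF M'(1)]
    by (simp add: minimal_distance_reducing_if_sign_free)
  with M'(2) show "x \<in> calDA A"
    by (auto simp: calDA_def)
qed

theorem proposition8p13:
  fixes A :: "'d::finite \<Rightarrow> 'n::finite \<Rightarrow> int"
    and M :: "('n \<Rightarrow> int) set"
  assumes pointed: "kerA A \<inter> {u. natvec u} = {0}"
    and minM: "minimal_markov_basis A M"
    and unique: "\<forall>M'. minimal_markov_basis A M' \<longrightarrow>
        (\<exists>\<sigma>. (\<forall>u\<in>M. \<sigma> u = 1 \<or> \<sigma> u = -1) \<and> M' = (\<lambda>u. (\<lambda>i. \<sigma> u * u i)) ` M)"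
    and dr: "distance_reducing A M"
  shows "SA A = DA A \<and> DA A = MA A \<and> MA A = calDA A"
proof -
  have variants: "sign_variant M M'" if M': "minimal_markov_basis A M'" for M'
  proof -
    obtain \<sigma> where "\<forall>u\<in>M. \<sigma> u = 1 \<or> \<sigma> u = -1" "M' = (\<lambda>u. (\<lambda>i. \<sigma> u * u i)) ` M"
      using unique M' by blast
    then show ?thesis
      by (simp add: sign_variant_sign_factors)
  qed
  have signed_SA_DA: "M \<union> uminus ` M \<subseteq> SA A \<inter> DA A"
    by (rule signed_subset_SA_DA[OF pointed minM variants])
  have "SA A \<union> DA A \<subseteq> M \<union> uminus ` M"
    by (rule SA_DA_subset_signed[OF dr])
  moreover have "MA A = M \<union> uminus ` M"
    by (rule MA_eq_signed[OF minM variants])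
  moreover have "calDA A \<subseteq> M \<union> uminus ` M"
    using calDA_subset[OF dr] signed_SA_DA by blast
  moreover have "MA A \<subseteq> calDA A"
    using MA_subset_calDA[OF dr variants] signed_SA_DA by blast
  ultimately show ?thesis
    using signed_SA_DA by blast
qed

end
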